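(* Consider an ESP instance with integer weights, fix $\varepsilon>0$, let $W=\sum_{v\in V}w_v$ and $\omega=\lceil \log W/\log(1+\varepsilon)\rceil$. For each $i\in\{0,\dots,\omega\}$ let $T_i$ be the tree obtained by applying a polynomial-time $5/2$-approximation algorithm for the quota version of the prize-collecting Steiner tree problem with quota $q_i=W-W(1+\varepsilon)^{-i}$ (in particular $T_0=(\{r\},\emptyset)$ and $T_\omega$ contains all vertices of positive weight). Let $H$ be the directed graph with vertex set $\{0,\dots,\omega\}$, arcs $(i,j)$ for all $i<j$, and arc costs $c_{i,j}=W(1+\varepsilon)^{-i}\ell(T_j)$, where $\ell(T)=\sum_{e\in E(T)}\ell_e$. Let $P=(n_0,\dots,n_l)$ with $n_0=0$, $n_l=\omega$ be a shortest $(0,\omega)$-path in $H$, and let $\sigma_{\mathrm{Alg}}$ be the expanding search pattern built in $l$ phases, where in phase $j\in\{1,\dots,l\}$ the edges of $T_{n_j}$ having fewer than two endpoints in $\bigcup_{i=0}^{j-1}V(T_{n_i})$ are appended in an order such that the set of explored vertices stays connected (edges both of whose endpoints are already explored being skipped). Then $L(\sigma_{\mathrm{Alg}})\le z$, where $z$ is the cost of a shortest $(0,\omega)$-path in $H$.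
   Context: ESP: connected undirected graph $G=(V,E)$, root $r$, edge lengths $\ell_e\in\mathbb{Z}_{\ge0}$, vertex weights $w_v\in\mathbb{Z}_{\ge0}$, $V^*=\{v:w_v>0\}$. An expanding search pattern is a sequence $\sigma=(e_1,\dots,e_m)$ of edges with $r\in e_1$ such that $\{e_1,\dots,e_i\}$ is a tree for every $i$. For $v\in V^*\setminus\{r\}$, $k_v=\min\{i:v\in e_i\}$, $k_r=0$, latency $L_v(\sigma)=\sum_{i\le k_v}\ell_{e_i}$, total latency $L(\sigma)=\sum_{v\in V^*}w_vL_v(\sigma)$. Quota version of prize-collecting Steiner tree with quota $q$: find a tree in $G$ containing $r$ whose vertices have total weight at least $q$, minimizing its length; a $5/2$-approximation returns such a tree of length at most $5/2$ times the minimum. The cost of a path in $H$ is the sum of its arc costs. *)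

theory Defs
  imports Complex_Main
begin

(* Undirected edges are 2-element vertex sets {a,b}. *)
definition edge_rel :: "'v set set \<Rightarrow> ('v \<times> 'v) set" where
  "edge_rel F = {(a,b). {a,b} \<in> F}"

definition connected_on :: "'v set \<Rightarrow> 'v set set \<Rightarrow> bool" where
  "connected_on U F \<longleftrightarrow> (\<forall>u\<in>U. \<forall>v\<in>U. (u,v) \<in> (edge_rel F)\<^sup>*)"

definition simple_edges :: "'v set \<Rightarrow> 'v set set" where
  "simple_edges U = {{a,b} | a b. a \<noteq> b \<and> a \<in> U \<and> b \<in> U}"

definition is_tree :: "'v set \<Rightarrow> 'v set set \<Rightarrow> bool" where
  "is_tree U F \<longleftrightarrow> finite U \<and> U \<noteq> {} \<and> F \<subseteq> simple_edges U \<and>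
     connected_on U F \<and> card F + 1 = card U"

definition rooted_tree_in :: "'v set \<Rightarrow> 'v set set \<Rightarrow> 'v \<Rightarrow> 'v set \<Rightarrow> 'v set set \<Rightarrow> bool" where
  "rooted_tree_in V E r U F \<longleftrightarrow> U \<subseteq> V \<and> F \<subseteq> E \<and> r \<in> U \<and> is_tree U F"

definition esp_graph :: "'v set \<Rightarrow> 'v set set \<Rightarrow> 'v \<Rightarrow> bool" where
  "esp_graph V E r \<longleftrightarrow> finite V \<and> E \<subseteq> simple_edges V \<and> r \<in> V \<and> connected_on V E"

definition is_esp :: "'v set set \<Rightarrow> 'v \<Rightarrow> 'v set list \<Rightarrow> bool" where
  "is_esp E r \<sigma> \<longleftrightarrow> set \<sigma> \<subseteq> E \<and> (\<sigma> \<noteq> [] \<longrightarrow> r \<in> hd \<sigma>) \<and>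
     (\<forall>i\<in>{1..length \<sigma>}. is_tree (\<Union>(set (take i \<sigma>))) (set (take i \<sigma>)))"

(* latency L_v(sigma); k_v is the (1-based) index of the first edge containing v *)
definition latency :: "('v set \<Rightarrow> nat) \<Rightarrow> 'v \<Rightarrow> 'v set list \<Rightarrow> 'v \<Rightarrow> nat" where
  "latency len r \<sigma> v = (if v = r then 0 else
     sum_list (map len (take (Suc (LEAST i. i < length \<sigma> \<and> v \<in> \<sigma> ! i)) \<sigma>)))"

definition total_latency :: "'v set \<Rightarrow> ('v \<Rightarrow> nat) \<Rightarrow> ('v set \<Rightarrow> nat) \<Rightarrow> 'v \<Rightarrow> 'v set list \<Rightarrow> nat" where
  "total_latency V w len r \<sigma> = (\<Sum>v\<in>{v\<in>V. 0 < w v}. w v * latency len r \<sigma> v)"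

definition elen :: "('v set \<Rightarrow> nat) \<Rightarrow> 'v set set \<Rightarrow> nat" where
  "elen len F = (\<Sum>e\<in>F. len e)"

(* paths from 0 to omega in H: strictly increasing lists *)
definition H_path :: "nat \<Rightarrow> nat list \<Rightarrow> bool" where
  "H_path \<omega> ns \<longleftrightarrow> ns \<noteq> [] \<and> hd ns = 0 \<and> last ns = \<omega> \<and> sorted_wrt (<) ns"

definition path_cost :: "(nat \<Rightarrow> nat \<Rightarrow> real) \<Rightarrow> nat list \<Rightarrow> real" where
  "path_cost c ns = sum_list (map (\<lambda>(i,j). c i j) (zip ns (tl ns)))"

fun skip_append :: "'v set \<Rightarrow> 'v set list \<Rightarrow> 'v set list" where
  "skip_append X [] = []"
| "skip_append X (e # es) =
     (if e \<subseteq> X then skip_append X es else e # skip_append (X \<union> e) es)"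

fun build_phases :: "'v set \<Rightarrow> 'v set list list \<Rightarrow> 'v set list" where
  "build_phases X [] = []"
| "build_phases X (ord # ords) =
     (let s = skip_append X ord in s @ build_phases (X \<union> \<Union>(set s)) ords)"

end

theory Submission
  imports Defs
begin

(* Let D k be the union of the vertex sets of T_{n_0}, ..., T_{n_k}. A vertex of T_{n_{k+1}}
   outside D k lies on an edge of T_{n_{k+1}} leaving D k, i.e. on an edge of phase k+1, so by
   induction D k is explored after k phases. A vertex first reached by D j therefore has latency
   at most l(T_{n_1}) + ... + l(T_{n_j}), and exchanging the summations gives
   L(sigma) <= sum_k l(T_{n_{k+1}}) w(V* - D k). Since T_{n_k} meets its quota,
   w(V - V(T_{n_k})) <= W (1+eps)^{-n_k}, so the k-th term is at most c_{n_k, n_{k+1}}. *)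

lemma set_skip_append_subset: "set (skip_append X es) \<subseteq> set es"
  by (induction es arbitrary: X) auto

lemma distinct_skip_append: "distinct es \<Longrightarrow> distinct (skip_append X es)"
  by (induction es arbitrary: X) (auto dest: set_skip_append_subset[THEN subsetD])

lemma skip_append_covers:
  "e \<in> set es \<Longrightarrow> e \<subseteq> X \<union> \<Union>(set (skip_append X es))"
proof (induction es arbitrary: X)
  case (Cons a es)
  show ?case
  proof (cases "e \<in> set es")
    case True
    then have "e \<subseteq> X \<union> \<Union>(set (skip_append X es))"
      and "e \<subseteq> X \<union> a \<union> \<Union>(set (skip_append (X \<union> a) es))"
      using Cons.IH by blast+
    then show ?thesis by auto
  next
    case False
    then show ?thesis using Cons.prems by auto
  qed
qed simp

lemma sum_list_skip_append_le:
  assumes "distinct es" "set es \<subseteq> F" "finite F"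
  shows "sum_list (map len (skip_append X es)) \<le> elen len F"
proof -
  have "sum_list (map len (skip_append X es)) = sum len (set (skip_append X es))"
    using assms(1) by (simp add: distinct_skip_append sum_list_distinct_conv_sum_set)
  also have "\<dots> \<le> sum len F"
    using assms(2,3) set_skip_append_subset by (intro sum_mono2) blast+
  finally show ?thesis by (simp add: elen_def)
qed

fun phases :: "'v set \<Rightarrow> 'v set list list \<Rightarrow> 'v set list list" where
  "phases X [] = []"
| "phases X (es # ess) = (let s = skip_append X es in s # phases (X \<union> \<Union>(set s)) ess)"

definition explored :: "'v set \<Rightarrow> 'v set list list \<Rightarrow> nat \<Rightarrow> 'v set" where
  "explored X ess k = X \<union> \<Union>(set (concat (take k (phases X ess))))"

lemma build_phases_eq_concat_phases: "build_phases X ess = concat (phases X ess)"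
  by (induction ess arbitrary: X) (simp_all add: Let_def)

lemma length_phases [simp]: "length (phases X ess) = length ess"
  by (induction ess arbitrary: X) (simp_all add: Let_def)

lemma nth_phases:
  "k < length ess \<Longrightarrow> phases X ess ! k = skip_append (explored X ess k) (ess ! k)"
proof (induction ess arbitrary: X k)
  case (Cons es ess)
  then show ?case by (cases k) (auto simp: explored_def Let_def Un_assoc)
qed simp

lemma explored_Suc:
  "k < length ess \<Longrightarrow> explored X ess (Suc k) = explored X ess k \<union> \<Union>(set (phases X ess ! k))"
  by (auto simp: explored_def take_Suc_conv_app_nth)

lemma subset_explored:
  assumes "D 0 \<subseteq> X"
    and "\<And>k v. k < length ess \<Longrightarrow> v \<in> D (Suc k) \<Longrightarrow> v \<notin> D k \<Longrightarrow> \<exists>e\<in>set (ess ! k). v \<in> e"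
    and "k \<le> length ess"
  shows "D k \<subseteq> explored X ess k"
  using assms(3)
proof (induction k)
  case 0
  then show ?case using assms(1) by (simp add: explored_def)
next
  case (Suc k)
  have "v \<in> explored X ess (Suc k)" if v: "v \<in> D (Suc k)" for v
  proof (cases "v \<in> D k")
    case True
    then show ?thesis using Suc by (auto simp: explored_Suc)
  next
    case False
    then obtain e where "e \<in> set (ess ! k)" "v \<in> e"
      using assms(2)[of k v] Suc.prems v by auto
    then show ?thesis
      using skip_append_covers Suc.prems by (fastforce simp: explored_Suc nth_phases)
  qed
  then show ?case by blast
qed

lemma latency_le_prefix:
  assumes "\<sigma> = P @ Q" "v \<in> \<Union>(set P)" "v \<noteq> r"
  shows "latency len r \<sigma> v \<le> sum_list (map len P)"
proof -
  obtain i where i: "i < length P" "v \<in> P ! i" using assms(2) by (auto simp: in_set_conv_nth)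
  define k where "k = (LEAST i. i < length \<sigma> \<and> v \<in> \<sigma> ! i)"
  have "k \<le> i" unfolding k_def using i assms(1) by (intro Least_le) (simp add: nth_append)
  then have "take (Suc k) \<sigma> = take (Suc k) P" using i assms(1) by simp
  then have "latency len r \<sigma> v = sum_list (map len (take (Suc k) P))"
    using assms(3) by (simp add: latency_def k_def)
  also have "\<dots> \<le> sum_list (map len (take (Suc k) P @ drop (Suc k) P))"
    by (simp only: map_append sum_list_append)
  finally show ?thesis by simp
qed

lemma sum_list_concat_take:
  "j \<le> length xss \<Longrightarrow>
    sum_list (map len (concat (take j xss))) = (\<Sum>k<j. sum_list (map len (xss ! k)))"
  by (induction j) (simp_all add: take_Suc_conv_app_nth)

lemma latency_build_phases_le:
  fixes D :: "nat \<Rightarrow> 'v set" and F :: "nat \<Rightarrow> 'v set set"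
  assumes D0: "D 0 \<subseteq> {r}"
    and D_step: "\<And>k v. k < length ess \<Longrightarrow> v \<in> D (Suc k) \<Longrightarrow> v \<notin> D k \<Longrightarrow> \<exists>e\<in>set (ess ! k). v \<in> e"
    and phase: "\<And>k. k < length ess \<Longrightarrow> distinct (ess ! k) \<and> set (ess ! k) \<subseteq> F k \<and> finite (F k)"
    and v: "v \<in> D (length ess)"
  shows "latency len r (build_phases {r} ess) v \<le> (\<Sum>k | k < length ess \<and> v \<notin> D k. elen len (F k))"
proof (cases "v = r")
  case True
  then show ?thesis by (simp add: latency_def)
next
  case False
  define j where "j = (LEAST j. v \<in> D j)"
  have j: "j \<le> length ess" "v \<in> D j"
    using v unfolding j_def by (auto intro: Least_le LeastI)
  have before_j: "{..<j} \<subseteq> {k. k < length ess \<and> v \<notin> D k}"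
    using j(1) not_less_Least unfolding j_def by fastforce
  define Ps where "Ps = phases {r} ess"
  have "build_phases {r} ess = concat (take j Ps) @ concat (drop j Ps)"
    by (simp add: build_phases_eq_concat_phases Ps_def flip: concat_append)
  moreover have "v \<in> \<Union>(set (concat (take j Ps)))"
    using subset_explored[where D = D, OF D0 D_step j(1)] j(2) False
    unfolding explored_def Ps_def by blast
  ultimately have "latency len r (build_phases {r} ess) v \<le> sum_list (map len (concat (take j Ps)))"
    using False by (rule latency_le_prefix)
  also have "\<dots> = (\<Sum>k<j. sum_list (map len (Ps ! k)))"
    using j(1) by (simp add: sum_list_concat_take Ps_def)
  also have "\<dots> \<le> (\<Sum>k<j. elen len (F k))"
  proof (intro sum_mono)
    fix k assume "k \<in> {..<j}"
    with j(1) have "k < length ess" by simp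
    then show "sum_list (map len (Ps ! k)) \<le> elen len (F k)"
      using phase by (simp add: Ps_def nth_phases sum_list_skip_append_le)
  qed
  also have "\<dots> \<le> (\<Sum>k | k < length ess \<and> v \<notin> D k. elen len (F k))"
    using before_j by (intro sum_mono2) auto
  finally show ?thesis .
qed

lemma sum_weighted_le_layers:
  fixes w f :: "'a \<Rightarrow> nat" and a :: "nat \<Rightarrow> nat"
  assumes "finite A" and "\<And>v. v \<in> A \<Longrightarrow> f v \<le> (\<Sum>k | k < m \<and> v \<notin> D k. a k)"
  shows "(\<Sum>v\<in>A. w v * f v) \<le> (\<Sum>k<m. a k * (\<Sum>v | v \<in> A \<and> v \<notin> D k. w v))"
proof -
  have "(\<Sum>v\<in>A. w v * f v) \<le> (\<Sum>v\<in>A. \<Sum>k | k \<in> {..<m} \<and> v \<notin> D k. w v * a k)"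
    using assms(2) by (intro sum_mono) (simp add: mult_le_mono2 flip: sum_distrib_left)
  also have "\<dots> = (\<Sum>k<m. \<Sum>v | v \<in> A \<and> v \<notin> D k. w v * a k)"
    using assms(1) by (intro sum.swap_restrict) simp_all
  also have "\<dots> = (\<Sum>k<m. a k * (\<Sum>v | v \<in> A \<and> v \<notin> D k. w v))"
    by (simp add: sum_distrib_left mult.commute)
  finally show ?thesis .
qed

lemma connected_on_edge_leaving:
  assumes "connected_on U F" "r \<in> U" "v \<in> U" "r \<in> X" "v \<notin> X"
  shows "\<exists>e\<in>F. v \<in> e \<and> \<not> e \<subseteq> X"
proof -
  have "(r, v) \<in> (edge_rel F)\<^sup>*"
    using assms(1-3) by (simp add: connected_on_def)
  moreover have "v \<noteq> r"
    using assms(4,5) by blast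
  ultimately obtain u where "{u, v} \<in> F"
    by (cases rule: rtranclE) (auto simp: edge_rel_def)
  then show ?thesis
    using assms(5) by blast
qed

lemma rooted_tree_vertex_in_new_edge:
  assumes "rooted_tree_in V E r U F" "r \<in> X" "v \<in> U" "v \<notin> X"
  shows "\<exists>e\<in>{e \<in> F. \<not> e \<subseteq> X}. v \<in> e"
  using connected_on_edge_leaving[of U F r v X] assms by (auto simp: rooted_tree_in_def is_tree_def)

lemma finite_tree_edges: "is_tree U F \<Longrightarrow> finite F"
  by (auto simp: is_tree_def simple_edges_def intro: finite_subset[of F "Pow U"])

lemma H_path_nth_le:
  assumes "H_path \<omega> ns" "k < length ns"
  shows "ns ! k \<le> \<omega>"
proof -
  have "ns ! k \<le> ns ! (length ns - 1)"
    using assms sorted_wrt_nth_less[of "(<)" ns k "length ns - 1"]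
    by (cases "k = length ns - 1") (force simp: H_path_def)+
  then show ?thesis
    using assms by (auto simp: H_path_def last_conv_nth)
qed

lemma path_cost_conv_sum:
  "path_cost c ns = (\<Sum>k < length ns - 1. c (ns ! k) (ns ! Suc k))"
  unfolding path_cost_def by (simp add: sum_list_sum_nth nth_tl atLeast0LessThan)

lemma sum_outside_le_of_quota:
  fixes w :: "'a \<Rightarrow> nat"
  assumes "finite V" "A \<subseteq> V" "U \<subseteq> V" "U \<subseteq> D"
    and "real (\<Sum>v\<in>V. w v) - t \<le> real (\<Sum>v\<in>U. w v)"
  shows "real (\<Sum>v | v \<in> A \<and> v \<notin> D. w v) \<le> t"
proof -
  have "(\<Sum>v | v \<in> A \<and> v \<notin> D. w v) \<le> (\<Sum>v\<in>V - U. w v)"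
    using assms(1-4) by (intro sum_mono2) auto
  then have "(\<Sum>v | v \<in> A \<and> v \<notin> D. w v) + (\<Sum>v\<in>U. w v) \<le> (\<Sum>v\<in>V. w v)"
    using sum.subset_diff[OF assms(3,1), of w] by simp
  then have "real (\<Sum>v | v \<in> A \<and> v \<notin> D. w v) + real (\<Sum>v\<in>U. w v) \<le> real (\<Sum>v\<in>V. w v)"
    by (metis of_nat_add of_nat_le_iff)
  then show ?thesis
    using assms(5) by linarith
qed

theorem lemma6:
  fixes V :: "'v set" and E :: "'v set set" and r :: 'v
    and len :: "'v set \<Rightarrow> nat" and w :: "'v \<Rightarrow> nat"
    and \<epsilon> :: real and W :: nat and \<omega> :: nat
    and q :: "nat \<Rightarrow> real"
    and VT :: "nat \<Rightarrow> 'v set" and FT :: "nat \<Rightarrow> 'v set set"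
    and c :: "nat \<Rightarrow> nat \<Rightarrow> real"
    and ns :: "nat list" and ords :: "'v set list list" and \<sigma> :: "'v set list"
  assumes G: "esp_graph V E r"
    and eps: "\<epsilon> > 0"
    and W_def: "W = (\<Sum>v\<in>V. w v)"
    and omega_def: "\<omega> = nat \<lceil>ln (real W) / ln (1 + \<epsilon>)\<rceil>"
    and q_def: "\<And>i. q i = real W - real W / (1 + \<epsilon>) ^ i"
    and T_tree: "\<And>i. i \<le> \<omega> \<Longrightarrow> rooted_tree_in V E r (VT i) (FT i)"
    and T_quota: "\<And>i. i \<le> \<omega> \<Longrightarrow> real (\<Sum>v\<in>VT i. w v) \<ge> q i"
    and T_approx: "\<And>i U F. i \<le> \<omega> \<Longrightarrow> rooted_tree_in V E r U F \<Longrightarrow>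
          real (\<Sum>v\<in>U. w v) \<ge> q i \<Longrightarrow> real (elen len (FT i)) \<le> 5/2 * real (elen len F)"
    and T0: "VT 0 = {r}" "FT 0 = {}"
    and Tomega: "{v\<in>V. 0 < w v} \<subseteq> VT \<omega>"
    and c_def: "\<And>i j. c i j = real W / (1 + \<epsilon>) ^ i * real (elen len (FT j))"
    and P_path: "H_path \<omega> ns"
    and P_shortest: "\<And>ns'. H_path \<omega> ns' \<Longrightarrow> path_cost c ns \<le> path_cost c ns'"
    and ords_len: "length ords = length ns - 1"
    and ords_perm: "\<And>k. k < length ords \<Longrightarrow> distinct (ords ! k) \<and>
          set (ords ! k) = {e \<in> FT (ns ! Suc k). \<not> e \<subseteq> (\<Union>i\<le>k. VT (ns ! i))}"
    and sigma_def: "\<sigma> = build_phases {r} ords"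
    and sigma_esp: "is_esp E r \<sigma>"
  shows "real (total_latency V w len r \<sigma>) \<le> path_cost c ns"
proof -
  define m where "m = length ords"
  define D where "D k = (\<Union>i\<le>k. VT (ns ! i))" for k
  define F where "F k = FT (ns ! Suc k)" for k
  define Vpos where "Vpos = {v\<in>V. 0 < w v}"
  have m: "length ns = Suc m"
    using ords_len P_path by (auto simp: m_def H_path_def)
  have ns_0: "ns ! 0 = 0" and ns_m: "ns ! m = \<omega>"
    using P_path m by (auto simp: H_path_def hd_conv_nth last_conv_nth)
  have tree: "rooted_tree_in V E r (VT (ns ! k)) (FT (ns ! k))" if "k \<le> m" for k
    using T_tree H_path_nth_le[OF P_path] m that by simp
  have D_0: "D 0 \<subseteq> {r}"
    using ns_0 T0 by (simp add: D_def)
  have r_in_D: "r \<in> D k" for k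
    using ns_0 T0 unfolding D_def by (intro UN_I[of 0]) auto
  have D_step: "\<exists>e\<in>set (ords ! k). v \<in> e" if "k < m" "v \<in> D (Suc k)" "v \<notin> D k" for k v
    using rooted_tree_vertex_in_new_edge[OF tree[of "Suc k"] r_in_D[of k], of v] ords_perm[of k] that
    by (auto simp: m_def D_def atMost_Suc)
  have phase: "distinct (ords ! k) \<and> set (ords ! k) \<subseteq> F k \<and> finite (F k)" if "k < m" for k
    using ords_perm[of k] tree[of "Suc k"] that
    by (auto simp: m_def F_def rooted_tree_in_def finite_tree_edges)
  have latency_bound: "latency len r \<sigma> v \<le> (\<Sum>k | k < m \<and> v \<notin> D k. elen len (F k))"
    if "v \<in> Vpos" for v
    using latency_build_phases_le[where D = D and F = F, OF D_0 D_step phase] that Tomega ns_m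
    by (auto simp: sigma_def m_def D_def Vpos_def)
  have weight_outside: "real (\<Sum>v | v \<in> Vpos \<and> v \<notin> D k. w v) \<le> real W / (1 + \<epsilon>) ^ (ns ! k)"
    if "k < m" for k
    using tree[of k] that G T_quota[of "ns ! k"] H_path_nth_le[OF P_path] m q_def W_def
    by (intro sum_outside_le_of_quota[of V]) (auto simp: Vpos_def D_def rooted_tree_in_def esp_graph_def)
  have "total_latency V w len r \<sigma> \<le> (\<Sum>k<m. elen len (F k) * (\<Sum>v | v \<in> Vpos \<and> v \<notin> D k. w v))"
    unfolding total_latency_def Vpos_def[symmetric]
    using G latency_bound by (intro sum_weighted_le_layers) (auto simp: esp_graph_def Vpos_def)
  then have "real (total_latency V w len r \<sigma>)
      \<le> (\<Sum>k<m. real (elen len (F k)) * real (\<Sum>v | v \<in> Vpos \<and> v \<notin> D k. w v))"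
    by (simp flip: of_nat_mult of_nat_sum)
  also have "\<dots> \<le> (\<Sum>k<m. real (elen len (F k)) * (real W / (1 + \<epsilon>) ^ (ns ! k)))"
    using weight_outside by (intro sum_mono mult_left_mono) simp_all
  also have "\<dots> = path_cost c ns"
    by (simp add: path_cost_conv_sum m c_def F_def mult.commute)
  finally show ?thesis .
qed

end
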